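(* If $\Sigma$ is of type $\mathfrak d_l$ ($l\ge4$) and $\Gamma=Z_{\widetilde M}(\widetilde K)$ (of order 4), then $$d(P_\Gamma)=\begin{cases}\frac12(\psi,\psi)^{-1/2}l^{1/2}, & l\text{ even},\\ \frac{\sqrt2}{4}(\psi,\psi)^{-1/2}(2l-1)^{1/2}, & l\text{ odd}.\end{cases}$$
   Context: Let $(\mathfrak u,\theta,\langle,\rangle)$ be a reduced, compact, irreducible orthogonal involutive Lie algebra ($\mathfrak u=\mathfrak k_0\oplus\mathfrak p_*$ the $\pm1$ eigenspaces of $\theta$), $\widetilde U$ the simply connected group of $\mathfrak u$, $\widetilde K$ the fixed group of the induced involution, $\widetilde M=\widetilde U/\widetilde K$, $\widetilde{\mathrm{Exp}}(X)=\widetilde\exp(X)\widetilde K$ ($X\in\mathfrak p_*$), and $Z_{\widetilde M}(\widetilde K)$ the group of points of $\widetilde M$ fixed by all left translations by $\widetilde K$. $(\cdot,\cdot)$ is the Killing form of $\mathfrak u\otimes\mathbb C$, positive definite on $\mathfrak h_{\mathfrak p_0}=\sqrt{-1}\mathfrak h_{\mathfrak p_*}$ ($\mathfrak h_{\mathfrak p_*}$ maximal abelian in $\mathfrak p_*$); $\Sigma\subset\mathfrak h_{\mathfrak p_0}$ is the restricted root system with simple roots $\gamma_1,\dots,\gamma_l$ and highest root $\psi=\sum d_i\gamma_i$; $e_j$ defined by $(e_j,\gamma_i)=\delta_{ij}/d_j$; $\triangle=\{x:(x,\gamma_i)\ge0\ \forall i,\ (x,\psi)\le1\}$; $P_\Gamma=\{x\in\triangle:(x,e_i)\le\frac12(e_i,e_i)$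 for all $i$ with $\widetilde{\mathrm{Exp}}(\pi\sqrt{-1}e_i)\in\Gamma\}$; $d(P_\Gamma)=\max_{x\in P_\Gamma}(x,x)^{1/2}$. *)

theory Defs
  imports Complex_Main
begin

text \<open>The ambient space
 h_p0 is modelled as the real functions on {1..l} (vectors are functions
 nat => real vanishing outside {1..l}); the Killing form restricted to it
 is c times the standard inner product, c > 0 arbitrary (any D_l root
 system is, up to isometry, of this form for a unique c).\<close>

definition Vsp :: "nat \<Rightarrow> (nat \<Rightarrow> real) set" where
  "Vsp l = {x. \<forall>i. i \<notin> {1..l} \<longrightarrow> x i = 0}"

definition B :: "real \<Rightarrow> nat \<Rightarrow> (nat \<Rightarrow> real) \<Rightarrow> (nat \<Rightarrow> real) \<Rightarrow> real" where
  "B c l x y = c * (\<Sum>i=1..l. x i * y i)"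

definition eps :: "nat \<Rightarrow> nat \<Rightarrow> real" where
  "eps k = (\<lambda>i. if i = k then 1 else 0)"

text \<open>Simple roots of D_l (Bourbaki numbering).\<close>
definition Dgamma :: "nat \<Rightarrow> nat \<Rightarrow> nat \<Rightarrow> real" where
  "Dgamma l i = (if i < l then (\<lambda>k. eps i k - eps (Suc i) k)
                 else (\<lambda>k. eps (l - 1) k + eps l k))"

text \<open>Highest root psi = eps_1 + eps_2 = sum d_i gamma_i.\<close>
definition Dpsi :: "nat \<Rightarrow> real" where
  "Dpsi = (\<lambda>k. eps 1 k + eps 2 k)"

text \<open>Coefficients d_i of psi in the simple roots.\<close>
definition Dd :: "nat \<Rightarrow> nat \<Rightarrow> real" where
  "Dd l i = (if i = 1 \<or> i = l - 1 \<or> i = l then 1 else 2)"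

definition De :: "real \<Rightarrow> nat \<Rightarrow> nat \<Rightarrow> nat \<Rightarrow> real" where
  "De c l j = (THE x. x \<in> Vsp l \<and>
      (\<forall>i\<in>{1..l}. B c l x (Dgamma l i) = (if i = j then 1 / Dd l j else 0)))"

definition Dtriangle :: "real \<Rightarrow> nat \<Rightarrow> (nat \<Rightarrow> real) set" where
  "Dtriangle c l = {x \<in> Vsp l. (\<forall>i\<in>{1..l}. B c l x (Dgamma l i) \<ge> 0) \<and> B c l x Dpsi \<le> 1}"

text \<open>P_Gamma, where J is the set of indices i with Exp(pi sqrt(-1) e_i) in Gamma.\<close>
definition DP :: "real \<Rightarrow> nat \<Rightarrow> nat set \<Rightarrow> (nat \<Rightarrow> real) set" where
  "DP c l J = {x \<in> Dtriangle c l. \<forall>i\<in>J. B c l x (De c l i) \<le> B c l (De c l i) (De c l i) / 2}"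

definition diamP :: "real \<Rightarrow> nat \<Rightarrow> (nat \<Rightarrow> real) set \<Rightarrow> real" where
  "diamP c l P = (GREATEST r. r \<in> (\<lambda>x. sqrt (B c l x x)) ` P)"

end

(*
  In coordinates x_1, ..., x_l, where (x, y) = c * (x . y), Gamma = Z(K) corresponds to the nodes
  J = {1, l - 1, l} with d_i = 1, and e_1, e_l, e_(l-1) are eps_1 / c, (eps_1 + ... + eps_l) / (2c)
  and (eps_1 + ... + eps_(l-1) - eps_l) / (2c). So a point of P_Gamma satisfies
  x_1 >= ... >= x_(l-1) >= |x_l|, x_1 <= 1/(2c) and |x_1| + ... + |x_l| <= l/(4c).
  With z_k = 4c |x_k| in [0, 2] and z_1 + ... + z_l <= l,
    16 c (x, x) = sum z_k^2 = 2 sum z_k - sum z_k (2 - z_k),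
  and the defect sum z_k (2 - z_k) bounds the distance from sum z_k to an even integer,
  which gives 16 c (x, x) <= 2l for even l and <= 2l - 1 for odd l.  Equality holds at
  x = (1/(2c), ..., 1/(2c), b, 0, ..., 0) with l div 2 leading entries and b = 0 resp. 1/(4c).
*)

theory Submission
  imports Defs
begin

lemma sum_close_to_even:
  fixes z :: "'a \<Rightarrow> real"
  assumes "finite A" and z: "\<forall>i\<in>A. 0 \<le> z i \<and> z i \<le> 2"
  shows "\<exists>p::int. \<bar>sum z A - 2 * of_int p\<bar> \<le> (\<Sum>i\<in>A. z i * (2 - z i))"
proof -
  have "\<exists>q::int. \<bar>z i - 2 * of_int q\<bar> \<le> z i * (2 - z i)" if "i \<in> A" for i
  proof (cases "z i \<le> 1")
    case True
    have "0 \<le> z i * (1 - z i)"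
      using True z that by simp
    then have "\<bar>z i - 2 * of_int 0\<bar> \<le> z i * (2 - z i)"
      using z that by (simp add: algebra_simps)
    then show ?thesis ..
  next
    case False
    have "0 \<le> (z i - 1) * (2 - z i)"
      using False z that by simp
    then have "\<bar>z i - 2 * of_int 1\<bar> \<le> z i * (2 - z i)"
      using z that by (simp add: abs_of_nonpos algebra_simps)
    then show ?thesis ..
  qed
  then obtain q :: "'a \<Rightarrow> int"
    where q: "\<And>i. i \<in> A \<Longrightarrow> \<bar>z i - 2 * of_int (q i)\<bar> \<le> z i * (2 - z i)"
    by metis
  have "\<bar>sum z A - 2 * of_int (sum q A)\<bar> = \<bar>\<Sum>i\<in>A. z i - 2 * of_int (q i)\<bar>"
    by (simp add: sum_subtractf sum_distrib_left)
  also have "\<dots> \<le> (\<Sum>i\<in>A. \<bar>z i - 2 * of_int (q i)\<bar>)"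
    by (rule sum_abs)
  also have "\<dots> \<le> (\<Sum>i\<in>A. z i * (2 - z i))"
    using q by (rule sum_mono)
  finally show ?thesis ..
qed

lemma sum_squares_le_parity_bound:
  fixes z :: "'a \<Rightarrow> real"
  assumes "finite A" and z: "\<forall>i\<in>A. 0 \<le> z i \<and> z i \<le> 2" and sum_le: "sum z A \<le> real n"
  shows "(\<Sum>i\<in>A. (z i)\<^sup>2) \<le> (if even n then 2 * real n else 2 * real n - 1)"
proof -
  have squares: "(\<Sum>i\<in>A. (z i)\<^sup>2) = 2 * sum z A - (\<Sum>i\<in>A. z i * (2 - z i))"
    by (simp add: power2_eq_square algebra_simps sum_subtractf sum_distrib_right)
  have defect_nonneg: "0 \<le> (\<Sum>i\<in>A. z i * (2 - z i))"
    using z by (intro sum_nonneg) simp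
  show ?thesis
  proof (cases "even n")
    case True
    then show ?thesis using squares defect_nonneg sum_le by simp
  next
    case False
    obtain p :: int where p: "\<bar>sum z A - 2 * of_int p\<bar> \<le> (\<Sum>i\<in>A. z i * (2 - z i))"
      using sum_close_to_even[OF assms(1,2)] ..
    from False have "2 * p \<noteq> int n" by presburger
    then have "2 * of_int p \<le> real n - 1 \<or> real n + 1 \<le> 2 * of_int p"
      by linarith
    then show ?thesis using squares p sum_le False by (auto simp: abs_le_iff)
  qed
qed

lemma antitone_on_ivl:
  fixes x :: "nat \<Rightarrow> 'a::preorder"
  assumes dec: "\<And>i. i \<in> {m..<n} \<Longrightarrow> x (Suc i) \<le> x i"
    and ij: "m \<le> i" "i \<le> j" "j \<le> n"
  shows "x j \<le> x i"
  using ij(2)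
proof (induction rule: dec_induct)
  case (step k)
  then have "x (Suc k) \<le> x k"
    using dec ij by simp
  then show ?case
    using step.IH by (rule order_trans)
qed simp

lemma B_diff_left: "B c l (\<lambda>k. x k - y k) z = B c l x z - B c l y z"
  by (simp add: B_def algebra_simps sum_subtractf)

lemma B_add_right: "B c l x (\<lambda>k. y k + z k) = B c l x y + B c l x z"
  by (simp add: B_def algebra_simps sum.distrib)

lemma B_diff_right: "B c l x (\<lambda>k. y k - z k) = B c l x y - B c l x z"
  by (simp add: B_def algebra_simps sum_subtractf)

lemma B_eps: "k \<in> {1..l} \<Longrightarrow> B c l x (eps k) = c * x k"
  by (simp add: B_def eps_def if_distrib[of "(*) _"] cong: if_cong)

lemma B_Dgamma_less: "1 \<le> i \<Longrightarrow> i < l \<Longrightarrow> B c l x (Dgamma l i) = c * (x i - x (Suc i))"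
  by (simp add: Dgamma_def B_diff_right B_eps right_diff_distrib)

lemma B_Dgamma_last: "2 \<le> l \<Longrightarrow> B c l x (Dgamma l l) = c * (x (l - 1) + x l)"
  by (simp add: Dgamma_def B_add_right B_eps distrib_left)

lemma B_Dpsi: "2 \<le> l \<Longrightarrow> B c l x Dpsi = c * (x 1 + x 2)"
  by (simp add: Dpsi_def B_add_right B_eps distrib_left)

lemma B_Dpsi_self: "2 \<le> l \<Longrightarrow> B c l Dpsi Dpsi = 2 * c"
  unfolding B_Dpsi by (simp add: Dpsi_def eps_def)

lemma orthogonal_Dgamma_imp_zero:
  assumes c: "c > 0" and l: "2 \<le> l" and d: "d \<in> Vsp l"
    and orth: "\<forall>i\<in>{1..l}. B c l d (Dgamma l i) = 0"
  shows "d = (\<lambda>_. 0)"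
proof -
  have step: "d (Suc i) = d i" if "i \<in> {1..<l}" for i
    using orth[rule_format, of i] that c by (simp add: B_Dgamma_less)
  have const: "d k = d l" if "k \<in> {1..l}" for k
    using antitone_on_ivl[of 1 l d k l] antitone_on_ivl[of 1 l "\<lambda>k. - d k" k l] step that
    by fastforce
  have "d (l - 1) + d l = 0"
    using orth[rule_format, of l] l c by (simp add: B_Dgamma_last)
  with const[of "l - 1"] l have "d l = 0" by simp
  with const d show ?thesis by (auto simp: Vsp_def)
qed

lemma De_unique:
  assumes "c > 0" "2 \<le> l" "v \<in> Vsp l"
    and "\<And>i. 1 \<le> i \<Longrightarrow> i < l \<Longrightarrow> c * (v i - v (Suc i)) = (if i = j then 1 / Dd l j else 0)"
    and "c * (v (l - 1) + v l) = (if l = j then 1 / Dd l j else 0)"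
  shows "De c l j = v"
  unfolding De_def
proof (rule the_equality)
  have v_Dgamma: "B c l v (Dgamma l i) = (if i = j then 1 / Dd l j else 0)" if "i \<in> {1..l}" for i
    using that assms by (cases "i = l") (auto simp: B_Dgamma_less B_Dgamma_last)
  then show "v \<in> Vsp l \<and> (\<forall>i\<in>{1..l}. B c l v (Dgamma l i) = (if i = j then 1 / Dd l j else 0))"
    using assms(3) by blast
  fix x assume x: "x \<in> Vsp l \<and> (\<forall>i\<in>{1..l}. B c l x (Dgamma l i) = (if i = j then 1 / Dd l j else 0))"
  have "(\<lambda>k. x k - v k) = (\<lambda>_. 0)"
    using assms x v_Dgamma
    by (intro orthogonal_Dgamma_imp_zero) (auto simp: Vsp_def B_diff_left)
  then show "x = v" by (simp add: fun_eq_iff)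
qed

lemma De_first:
  assumes "c > 0" "3 \<le> l"
  shows "De c l 1 = (\<lambda>k. if k = 1 then 1 / c else 0)"
  by (rule De_unique) (use assms in \<open>auto simp: Vsp_def Dd_def\<close>)

lemma De_last:
  assumes "c > 0" "2 \<le> l"
  shows "De c l l = (\<lambda>k. if k \<in> {1..l} then 1 / (2 * c) else 0)"
  by (rule De_unique) (use assms in \<open>auto simp: Vsp_def Dd_def\<close>)

lemma De_penultimate:
  assumes "c > 0" "2 \<le> l"
  shows "De c l (l - 1) = (\<lambda>k. if k \<in> {1..<l} then 1 / (2 * c) else if k = l then - 1 / (2 * c) else 0)"
  by (rule De_unique) (use assms in \<open>auto simp: Vsp_def Dd_def\<close>)

lemma B_De_first:
  assumes "c > 0" "3 \<le> l"
  shows "B c l x (De c l 1) = x 1"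
  unfolding De_first[OF assms] using assms
  by (simp add: B_def if_distrib[of "(*) _"] cong: if_cong)

lemma B_De_last:
  assumes "c > 0" "2 \<le> l"
  shows "B c l x (De c l l) = (\<Sum>k=1..l. x k) / 2"
proof -
  have "B c l x (De c l l) = c * (\<Sum>k=1..l. x k / (2 * c))"
    unfolding De_last[OF assms] B_def by (intro arg_cong[where f = "(*) c"] sum.cong) auto
  then show ?thesis
    using assms by (simp add: sum_divide_distrib[symmetric])
qed

lemma B_De_penultimate:
  assumes "c > 0" "2 \<le> l"
  shows "B c l x (De c l (l - 1)) = ((\<Sum>k=1..<l. x k) - x l) / 2"
proof -
  have "(\<Sum>k=1..<l. x k * De c l (l - 1) k) = (\<Sum>k=1..<l. x k / (2 * c))"
    and "De c l (l - 1) l = - 1 / (2 * c)"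
    unfolding De_penultimate[OF assms] by (auto intro: sum.cong)
  then have "B c l x (De c l (l - 1)) = c * ((\<Sum>k=1..<l. x k / (2 * c)) + x l * (- 1 / (2 * c)))"
    using assms unfolding B_def by (simp add: sum.last_plus)
  also have "\<dots> = ((\<Sum>k=1..<l. x k) - x l) / 2"
    using assms by (simp add: sum_divide_distrib[symmetric] field_simps)
  finally show ?thesis .
qed

lemma B_De_self:
  assumes "c > 0" "3 \<le> l"
  shows "B c l (De c l 1) (De c l 1) = 1 / c"
    and "B c l (De c l l) (De c l l) = real l / (4 * c)"
    and "B c l (De c l (l - 1)) (De c l (l - 1)) = real l / (4 * c)"
proof -
  have "2 \<le> l" using assms by simp
  show "B c l (De c l 1) (De c l 1) = 1 / c"
    using B_De_first[OF assms, of "De c l 1"] unfolding De_first[OF assms] by simp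
  show "B c l (De c l l) (De c l l) = real l / (4 * c)"
    using B_De_last[OF assms(1) \<open>2 \<le> l\<close>, of "De c l l"]
    unfolding De_last[OF assms(1) \<open>2 \<le> l\<close>] by simp
  have "B c l (De c l (l - 1)) (De c l (l - 1)) = ((\<Sum>k=1..<l. De c l (l - 1) k) - De c l (l - 1) l) / 2"
    by (rule B_De_penultimate[OF assms(1) \<open>2 \<le> l\<close>])
  also have "\<dots> = (real (l - 1) / (2 * c) + 1 / (2 * c)) / 2"
    unfolding De_penultimate[OF assms(1) \<open>2 \<le> l\<close>] by simp
  also have "\<dots> = real l / (4 * c)"
    using assms by (simp add: of_nat_diff field_simps)
  finally show "B c l (De c l (l - 1)) (De c l (l - 1)) = real l / (4 * c)" .
qed

lemma mem_Dtriangle_iff: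
  assumes "c > 0" "2 \<le> l"
  shows "x \<in> Dtriangle c l \<longleftrightarrow>
    x \<in> Vsp l \<and> (\<forall>i\<in>{1..<l}. x (Suc i) \<le> x i) \<and> 0 \<le> x (l - 1) + x l \<and>
    x 1 + x 2 \<le> 1 / c"
proof -
  have "{1..l} = insert l {1..<l}"
    using assms by auto
  then have "(\<forall>i\<in>{1..l}. 0 \<le> B c l x (Dgamma l i)) \<longleftrightarrow>
      (\<forall>i\<in>{1..<l}. x (Suc i) \<le> x i) \<and> 0 \<le> x (l - 1) + x l"
    using assms by (auto simp: B_Dgamma_less B_Dgamma_last zero_le_mult_iff)
  then show ?thesis
    using assms by (simp add: Dtriangle_def B_Dpsi pos_le_divide_eq mult.commute)
qed

lemma mem_DP_iff:
  assumes "c > 0" "3 \<le> l"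
  shows "x \<in> DP c l {1, l - 1, l} \<longleftrightarrow> x \<in> Dtriangle c l \<and> x 1 \<le> 1 / (2 * c) \<and>
    (\<Sum>k=1..l. x k) \<le> real l / (4 * c) \<and> (\<Sum>k=1..<l. x k) - x l \<le> real l / (4 * c)"
proof -
  have "2 \<le> l" using assms by simp
  \<comment> \<open>The norms must be evaluated first: \<open>B_De_first\<close> etc. would also rewrite them.\<close>
  show ?thesis
    unfolding DP_def ball_simps mem_Collect_eq B_De_self[OF assms]
    unfolding B_De_first[OF assms] B_De_last[OF assms(1) \<open>2 \<le> l\<close>]
      B_De_penultimate[OF assms(1) \<open>2 \<le> l\<close>]
    using assms by (auto simp: field_simps)
qed

lemma DP_abs_bounds:
  assumes c: "c > 0" and l: "3 \<le> l" and x: "x \<in> DP c l {1, l - 1, l}"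
  shows "\<forall>k\<in>{1..l}. \<bar>x k\<bar> \<le> 1 / (2 * c)"
    and "(\<Sum>k=1..l. \<bar>x k\<bar>) \<le> real l / (4 * c)"
proof -
  have "2 \<le> l" using l by simp
  have dec: "\<forall>i\<in>{1..<l}. x (Suc i) \<le> x i" and last: "0 \<le> x (l - 1) + x l"
    and first: "x 1 \<le> 1 / (2 * c)" and sum_all: "(\<Sum>k=1..l. x k) \<le> real l / (4 * c)"
    and sum_flip: "(\<Sum>k=1..<l. x k) - x l \<le> real l / (4 * c)"
    using x unfolding mem_DP_iff[OF c l] mem_Dtriangle_iff[OF c \<open>2 \<le> l\<close>] by simp_all
  have between: "x j \<le> x i" if "1 \<le> i" "i \<le> j" "j \<le> l" for i j
    using antitone_on_ivl[of 1 l x i j] dec that by blast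
  have "\<bar>x l\<bar> \<le> x (l - 1)"
    using between[of "l - 1" l] last l by (simp add: abs_le_iff)
  then have inner: "\<bar>x l\<bar> \<le> x k \<and> x k \<le> 1 / (2 * c)" if "k \<in> {1..<l}" for k
    using between[of k "l - 1"] between[of 1 k] first that by fastforce
  have "l - 1 \<in> {1..<l}" using l by simp
  with inner have last_le: "\<bar>x l\<bar> \<le> 1 / (2 * c)" by fastforce
  show "\<forall>k\<in>{1..l}. \<bar>x k\<bar> \<le> 1 / (2 * c)"
  proof
    fix k assume "k \<in> {1..l}"
    then consider "k \<in> {1..<l}" | "k = l" by fastforce
    then show "\<bar>x k\<bar> \<le> 1 / (2 * c)"
      by cases (use inner[of k] last_le in auto)
  qed
  have "(\<Sum>k=1..<l. \<bar>x k\<bar>) = (\<Sum>k=1..<l. x k)"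
    using inner by (intro sum.cong) force+
  then have "(\<Sum>k=1..l. \<bar>x k\<bar>) = (\<Sum>k=1..<l. x k) + \<bar>x l\<bar>"
    using l by (simp add: sum.last_plus)
  also have "\<dots> \<le> real l / (4 * c)"
    using sum_all sum_flip l by (simp add: sum.last_plus abs_if)
  finally show "(\<Sum>k=1..l. \<bar>x k\<bar>) \<le> real l / (4 * c)" .
qed

lemma B_self_le_on_DP:
  assumes c: "c > 0" and l: "3 \<le> l" and x: "x \<in> DP c l {1, l - 1, l}"
  shows "B c l x x \<le> (if even l then 2 * real l else 2 * real l - 1) / (16 * c)"
proof -
  define z where "z k = 4 * c * \<bar>x k\<bar>" for k
  have "\<forall>k\<in>{1..l}. 0 \<le> z k \<and> z k \<le> 2"
    using DP_abs_bounds(1)[OF assms] c by (auto simp: z_def field_simps)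
  moreover have "sum z {1..l} = 4 * c * (\<Sum>k=1..l. \<bar>x k\<bar>)"
    by (simp add: z_def sum_distrib_left)
  then have "sum z {1..l} \<le> real l"
    using DP_abs_bounds(2)[OF assms] c by (simp add: field_simps)
  ultimately have "(\<Sum>k=1..l. (z k)\<^sup>2) \<le> (if even l then 2 * real l else 2 * real l - 1)"
    by (intro sum_squares_le_parity_bound) auto
  moreover have "(z k)\<^sup>2 = 16 * c * (c * (x k * x k))" for k
    by (simp add: z_def power_mult_distrib power2_eq_square)
  then have "(\<Sum>k=1..l. (z k)\<^sup>2) = 16 * c * B c l x x"
    by (simp add: B_def sum_distrib_left)
  ultimately show ?thesis
    using c by (simp add: field_simps)
qed

definition extremal_point :: "real \<Rightarrow> nat \<Rightarrow> real \<Rightarrow> nat \<Rightarrow> real" where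
  "extremal_point c m b k = (if k \<in> {1..m} then 1 / (2 * c) else if k = Suc m then b else 0)"

lemma sum_extremal_point:
  assumes "Suc m \<le> n" "f 0 = 0"
  shows "(\<Sum>k=1..n. f (extremal_point c m b k)) = real m * f (1 / (2 * c)) + f b"
  using assms(1)
proof (induction rule: dec_induct)
  case base
  have "(\<Sum>k=1..m. f (extremal_point c m b k)) = (\<Sum>k=1..m. f (1 / (2 * c)))"
    by (intro sum.cong) (auto simp: extremal_point_def)
  then show ?case
    by (simp add: extremal_point_def)
next
  case (step n)
  then show ?case
    using assms(2) by (simp add: extremal_point_def)
qed

lemma extremal_point_mem_DP:
  assumes c: "c > 0" and l: "3 \<le> l" and m: "Suc m < l"
    and b: "0 \<le> b" "b \<le> 1 / (2 * c)" and sum_le: "real m / (2 * c) + b \<le> real l / (4 * c)"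
  shows "extremal_point c m b \<in> DP c l {1, l - 1, l}"
proof -
  let ?w = "extremal_point c m b"
  have "2 \<le> l" using l by simp
  have bounds: "0 \<le> ?w k" "?w k \<le> 1 / (2 * c)" for k
    using b c by (simp_all add: extremal_point_def)
  have "?w \<in> Vsp l"
    using m by (auto simp: Vsp_def extremal_point_def)
  moreover have "\<forall>i\<in>{1..<l}. ?w (Suc i) \<le> ?w i"
    using b c by (auto simp: extremal_point_def)
  moreover have "(\<Sum>k=1..l. ?w k) = real m / (2 * c) + b"
    using sum_extremal_point[of m l "\<lambda>t. t"] m by simp
  moreover have "?w l = 0"
    using m by (simp add: extremal_point_def)
  moreover have "1 / (2 * c) + 1 / (2 * c) = 1 / c"
    by simp
  ultimately show ?thesis
    using bounds[of 1] bounds[of 2] bounds[of "l - 1"] bounds[of l] sum_le \<open>2 \<le> l\<close>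
    unfolding mem_DP_iff[OF c l] mem_Dtriangle_iff[OF c \<open>2 \<le> l\<close>]
    by (simp add: sum.last_plus)
qed

lemma B_extremal_point_self:
  assumes "Suc m \<le> l"
  shows "B c l (extremal_point c m b) (extremal_point c m b) = c * (real m / (2 * c)\<^sup>2 + b\<^sup>2)"
  using sum_extremal_point[OF assms, of "\<lambda>t. t\<^sup>2"] by (simp add: B_def power2_eq_square)

lemma DP_attains_bound:
  assumes c: "c > 0" and l: "3 \<le> l"
  shows "\<exists>x\<in>DP c l {1, l - 1, l}. B c l x x = (if even l then 2 * real l else 2 * real l - 1) / (16 * c)"
proof (cases "even l")
  case True
  then obtain m where m: "l = 2 * m" by blast
  have "extremal_point c m 0 \<in> DP c l {1, l - 1, l}"
    using c l m by (intro extremal_point_mem_DP) (auto simp: field_simps)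
  moreover have "B c l (extremal_point c m 0) (extremal_point c m 0) = 2 * real l / (16 * c)"
    using c l m by (subst B_extremal_point_self) (auto simp: power2_eq_square field_simps)
  ultimately show ?thesis
    using True by auto
next
  case False
  then obtain m where m: "l = 2 * m + 1" using oddE by blast
  have "extremal_point c m (1 / (4 * c)) \<in> DP c l {1, l - 1, l}"
    using c l m by (intro extremal_point_mem_DP) (auto simp: field_simps)
  moreover have "B c l (extremal_point c m (1 / (4 * c))) (extremal_point c m (1 / (4 * c)))
      = (2 * real l - 1) / (16 * c)"
    using c l m by (subst B_extremal_point_self) (auto simp: power2_eq_square field_simps)
  ultimately show ?thesis
    using False by auto
qed

lemma D_diameter_formula_eq:
  assumes "c > 0" "1 \<le> l"
  shows "(if even l then 1/2 * (2 * c) powr (-1/2) * sqrt (real l)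
          else sqrt 2 / 4 * (2 * c) powr (-1/2) * sqrt (2 * real l - 1))
    = sqrt ((if even l then 2 * real l else 2 * real l - 1) / (16 * c))"
proof -
  have "(2 * c) powr (-1/2) = 1 / sqrt (2 * c)"
    using assms by (simp add: powr_minus_divide powr_half_sqrt)
  moreover have "sqrt (2 * real l / (16 * c)) = 1/2 * (1 / sqrt (2 * c)) * sqrt (real l)"
    using assms by (intro real_sqrt_unique) (simp_all add: power_mult_distrib power_divide field_simps)
  moreover have "sqrt ((2 * real l - 1) / (16 * c)) = sqrt 2 / 4 * (1 / sqrt (2 * c)) * sqrt (2 * real l - 1)"
    using assms by (intro real_sqrt_unique) (simp_all add: power_mult_distrib power_divide field_simps)
  ultimately show ?thesis
    by simp
qed

theorem mainTheorem18:
  fixes c :: real and l :: nat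
  assumes "c > 0" and "l \<ge> 4"
  defines "J \<equiv> {i \<in> {1..l}. Dd l i = 1}"
  shows "diamP c l (DP c l J) =
    (if even l then 1/2 * (B c l Dpsi Dpsi) powr (-1/2) * sqrt (real l)
     else sqrt 2 / 4 * (B c l Dpsi Dpsi) powr (-1/2) * sqrt (2 * real l - 1))"
proof -
  define bound where "bound = (if even l then 2 * real l else 2 * real l - 1) / (16 * c)"
  have l: "3 \<le> l" using assms(2) by simp
  have J: "J = {1, l - 1, l}"
    using assms(2) by (auto simp: J_def Dd_def)
  obtain x where x: "x \<in> DP c l J" "B c l x x = bound"
    using DP_attains_bound[OF assms(1) l] unfolding J bound_def by blast
  have "diamP c l (DP c l J) = sqrt bound"
    unfolding diamP_def
  proof (rule Greatest_equality)
    show "sqrt bound \<in> (\<lambda>x. sqrt (B c l x x)) ` DP c l J"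
      using x by force
    show "y \<le> sqrt bound" if "y \<in> (\<lambda>x. sqrt (B c l x x)) ` DP c l J" for y
      using that B_self_le_on_DP[OF assms(1) l] unfolding J bound_def by auto
  qed
  also have "sqrt bound = (if even l then 1/2 * (2 * c) powr (-1/2) * sqrt (real l)
      else sqrt 2 / 4 * (2 * c) powr (-1/2) * sqrt (2 * real l - 1))"
    unfolding bound_def using assms by (intro D_diameter_formula_eq[symmetric]) auto
  also have "2 * c = B c l Dpsi Dpsi"
    using assms(2) by (simp add: B_Dpsi_self)
  finally show ?thesis .
qed

end
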